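(* Let $(\mathbf{s}_t,\mathbf{a}_t,\mathbf{s}_{t+k})\sim\mathcal{D}$ with real-valued action $\mathbf{a}_t$ of finite second moment, let $\overline{\mu}(s_t)=\mathbb{E}[\mathbf{a}_t\mid \mathbf{s}_t=s_t]$, $\overline{\xi}(s_t,s_{t+k})=\mathbb{E}[\mathbf{a}_t\mid \mathbf{s}_t=s_t,\mathbf{s}_{t+k}=s_{t+k}]$ and $$\Delta=\mathbb{E}_{\mathbf{s}_t}\Big[\mathrm{Var}_{\mathbf{s}_{t+k}\mid \mathbf{s}_t}\big(\mathbb{E}[\mathbf{a}_t\mid \mathbf{s}_t,\mathbf{s}_{t+k}]\big)\Big].$$ Let $\widehat{\mu}$ be an estimator of the BC policy obtained from a random dataset $\mathcal{D}_n$ and $\widehat{\xi}_{\widehat p}$ an estimator of the IDM policy obtained from a random dataset $\mathcal{D}_{\widehat p,m}$. Define $$\delta=\mathbb{E}_{\mathbf{s}_t}\big[\mathrm{Var}(\widehat{\mu}(\mathbf{s}_t))\big]-\mathbb{E}_{\mathbf{s}_t,\mathbf{s}_{t+k}}\big[\mathrm{Var}(\widehat{\xi}_{\widehat p}(\mathbf{s}_t,\mathbf{s}_{t+k}))\big],\qquad \beta=b_\mu^2(\widehat\mu)-b_\xi^2(\widehat\xi_{\widehat p}),$$ where the variances are over the randomness of the respective datasets and $$b_\mu^2(\widehat\mu)=\mathbb{E}_{\mathbf{s}_t}\Big[\big(\mathbb{E}_{\mathcal{D}_n}[\widehat\mu(\mathbf{s}_t)]-\overline{\mu}(\mathbf{s}_t)\big)^2\Big],\quad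 b_\xi^2(\widehat\xi_{\widehat p})=\mathbb{E}_{\mathbf{s}_t,\mathbf{s}_{t+k}}\Big[\big(\mathbb{E}_{\mathcal{D}_{\widehat p,m}}[\widehat\xi_{\widehat p}(\mathbf{s}_t,\mathbf{s}_{t+k})]-\overline{\xi}(\mathbf{s}_t,\mathbf{s}_{t+k})\big)^2\Big].$$ Then $$\widehat\Delta_{\widehat p}:=\mathrm{EPE}(\widehat\mu)-\mathrm{EPE}(\widehat\xi_{\widehat p})=\Delta+\delta+\beta.$$
   Context: Setting: an MDP with an unknown expert policy generating a data distribution $\mathcal{D}$ over tuples $(s_t,a_t,s_{t+k})$, where $s_{t+k}$ is the state $k\ge 1$ steps after $s_t$. $\widehat p(\cdot\mid s_t)$ is an approximate state predictor of the future state. The datasets are $\mathcal{D}_n=\{(s_t,a_t,s_{t+k})\stackrel{\text{i.i.d.}}{\sim}\mathcal{D}\}_{t=1}^n$ and $\mathcal{D}_{\widehat p,m}=\{(s_t,a_t,\widehat s_{t+k}) : (s_t,a_t)\stackrel{\text{i.i.d.}}{\sim}\mathcal{D},\ \widehat s_{t+k}\sim\widehat p(\cdot\mid s_t)\}_{t=1}^m$; $\mathbb{E}_{\mathcal{D}_n}$ and $\mathbb{E}_{\mathcal{D}_{\widehat p,m}}$ denote expectation over these random datasets, and the estimators are deterministic functions of their datasets, independent of the test sample. The expected prediction errors are $\mathrm{EPE}(\widehat\mu)=\mathbb{E}_{\mathbf{s}_t,\mathbf{a}_t,\mathcal{D}_n}[(\mathbf{a}_t-\widehat\mu(\mathbf{s}_t))^2]$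 and $\mathrm{EPE}(\widehat\xi_{\widehat p})=\mathbb{E}_{\mathbf{s}_t,\mathbf{a}_t,\mathbf{s}_{t+k},\mathcal{D}_{\widehat p,m}}[(\mathbf{a}_t-\widehat\xi_{\widehat p}(\mathbf{s}_t,\mathbf{s}_{t+k}))^2]$, where the test tuple $(\mathbf{s}_t,\mathbf{a}_t,\mathbf{s}_{t+k})\sim\mathcal{D}$ uses the ground-truth future state. *)

theory Defs
  imports "HOL-Probability.Probability"
begin

type_synonym 's tup = "'s \<times> real \<times> 's"

definition act :: "'s tup \<Rightarrow> real" where
  "act x = fst (snd x)"

definition cur :: "'s tup \<Rightarrow> 's" where
  "cur x = fst x"

definition fut :: "'s tup \<Rightarrow> 's" where
  "fut x = snd (snd x)"

definition sig_s :: "'s tup measure \<Rightarrow> 's measure \<Rightarrow> 's tup measure" where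
  "sig_s D SS = vimage_algebra (space D) cur SS"

definition sig_ss :: "'s tup measure \<Rightarrow> 's measure \<Rightarrow> 's tup measure" where
  "sig_ss D SS = vimage_algebra (space D) (\<lambda>x. (cur x, fut x)) (SS \<Otimes>\<^sub>M SS)"

definition mubar :: "'s tup measure \<Rightarrow> 's measure \<Rightarrow> 's tup \<Rightarrow> real" where
  "mubar D SS = real_cond_exp D (sig_s D SS) act"

definition xibar :: "'s tup measure \<Rightarrow> 's measure \<Rightarrow> 's tup \<Rightarrow> real" where
  "xibar D SS = real_cond_exp D (sig_ss D SS) act"

definition cond_var :: "'a measure \<Rightarrow> 'a measure \<Rightarrow> ('a \<Rightarrow> real) \<Rightarrow> 'a \<Rightarrow> real" where
  "cond_var M F X = real_cond_exp M F (\<lambda>x. (X x - real_cond_exp M F X x)\<^sup>2)"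

definition Delta :: "'s tup measure \<Rightarrow> 's measure \<Rightarrow> real" where
  "Delta D SS = (\<integral>x. cond_var D (sig_s D SS) (xibar D SS) x \<partial>D)"

definition var :: "'a measure \<Rightarrow> ('a \<Rightarrow> real) \<Rightarrow> real" where
  "var M X = (\<integral>w. (X w - (\<integral>v. X v \<partial>M))\<^sup>2 \<partial>M)"

text \<open>distribution of (s_t, a_t, hat s_{t+k}) with (s_t,a_t) ~ D and hat s_{t+k} ~ phat(.|s_t)\<close>
definition Dp :: "'s tup measure \<Rightarrow> ('s \<Rightarrow> 's measure) \<Rightarrow> 's tup measure" where
  "Dp D phat = D \<bind> (\<lambda>x. distr (phat (cur x)) D (\<lambda>s'. (cur x, act x, s')))"

definition data_n :: "'s tup measure \<Rightarrow> nat \<Rightarrow> (nat \<Rightarrow> 's tup) measure" where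
  "data_n D n = PiM {..<n} (\<lambda>_. D)"

definition data_pm :: "'s tup measure \<Rightarrow> ('s \<Rightarrow> 's measure) \<Rightarrow> nat \<Rightarrow> (nat \<Rightarrow> 's tup) measure" where
  "data_pm D phat m = PiM {..<m} (\<lambda>_. Dp D phat)"

text \<open>expected prediction errors (test tuple independent of the dataset)\<close>
definition EPE_mu :: "'s tup measure \<Rightarrow> (nat \<Rightarrow> 's tup) measure \<Rightarrow> ((nat \<Rightarrow> 's tup) \<Rightarrow> 's \<Rightarrow> real) \<Rightarrow> real" where
  "EPE_mu D P mu = (\<integral>z. (act (snd z) - mu (fst z) (cur (snd z)))\<^sup>2 \<partial>(P \<Otimes>\<^sub>M D))"

definition EPE_xi :: "'s tup measure \<Rightarrow> (nat \<Rightarrow> 's tup) measure \<Rightarrow> ((nat \<Rightarrow> 's tup) \<Rightarrow> 's \<Rightarrow> 's \<Rightarrow> real) \<Rightarrow> real" where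
  "EPE_xi D Q xi = (\<integral>z. (act (snd z) - xi (fst z) (cur (snd z)) (fut (snd z)))\<^sup>2 \<partial>(Q \<Otimes>\<^sub>M D))"

definition delta :: "'s tup measure \<Rightarrow> (nat \<Rightarrow> 's tup) measure \<Rightarrow> (nat \<Rightarrow> 's tup) measure
    \<Rightarrow> ((nat \<Rightarrow> 's tup) \<Rightarrow> 's \<Rightarrow> real) \<Rightarrow> ((nat \<Rightarrow> 's tup) \<Rightarrow> 's \<Rightarrow> 's \<Rightarrow> real) \<Rightarrow> real" where
  "delta D P Q mu xi =
     (\<integral>x. var P (\<lambda>d. mu d (cur x)) \<partial>D) - (\<integral>x. var Q (\<lambda>e. xi e (cur x) (fut x)) \<partial>D)"

definition bias2_mu :: "'s tup measure \<Rightarrow> 's measure \<Rightarrow> (nat \<Rightarrow> 's tup) measure \<Rightarrow> ((nat \<Rightarrow> 's tup) \<Rightarrow> 's \<Rightarrow> real) \<Rightarrow> real" where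
  "bias2_mu D SS P mu = (\<integral>x. ((\<integral>d. mu d (cur x) \<partial>P) - mubar D SS x)\<^sup>2 \<partial>D)"

definition bias2_xi :: "'s tup measure \<Rightarrow> 's measure \<Rightarrow> (nat \<Rightarrow> 's tup) measure \<Rightarrow> ((nat \<Rightarrow> 's tup) \<Rightarrow> 's \<Rightarrow> 's \<Rightarrow> real) \<Rightarrow> real" where
  "bias2_xi D SS Q xi = (\<integral>x. ((\<integral>e. xi e (cur x) (fut x) \<partial>Q) - xibar D SS x)\<^sup>2 \<partial>D)"

end

theory Submission
  imports Defs
begin

text \<open>For a predictor trained on a dataset drawn independently of the test tuple, Fubini and the
  pointwise bias--variance identity over the dataset split the expected prediction error into the
  averaged variance plus the squared distance of the mean predictor to the action. The mean
  predictor is measurable with respect to the conditioning \<open>\<sigma>\<close>-algebra (\<open>\<sigma>(s\<^sub>t)\<close> for BC,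
  \<open>\<sigma>(s\<^sub>t, s\<^sub>t\<^sub>+\<^sub>k)\<close> for the IDM), so Pythagoras in \<open>L\<^sup>2\<close> splits that distance into the
  irreducible error \<open>E[(a - E[a|F])\<^sup>2]\<close> and the squared bias. The difference of the two
  irreducible errors is, by the tower property for \<open>\<sigma>(s\<^sub>t) \<subseteq> \<sigma>(s\<^sub>t, s\<^sub>t\<^sub>+\<^sub>k)\<close>, the expected
  conditional variance \<open>\<Delta>\<close>. Neither the i.i.d. structure of the datasets nor the state
  predictor plays a role beyond making the dataset distributions probability measures.\<close>

lemma integrable_mult_of_square_integrable:
  fixes f g :: "'a \<Rightarrow> real"
  assumes [measurable]: "f \<in> borel_measurable M" "g \<in> borel_measurable M"
    and "integrable M (\<lambda>x. (f x)\<^sup>2)" "integrable M (\<lambda>x. (g x)\<^sup>2)"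
  shows "integrable M (\<lambda>x. f x * g x)"
proof (rule Bochner_Integration.integrable_bound)
  show "integrable M (\<lambda>x. (f x)\<^sup>2 + (g x)\<^sup>2)" using assms by auto
  show "AE x in M. norm (f x * g x) \<le> norm ((f x)\<^sup>2 + (g x)\<^sup>2)"
  proof (intro AE_I2)
    fix x
    have "2 * \<bar>f x\<bar> * \<bar>g x\<bar> \<le> \<bar>f x\<bar>\<^sup>2 + \<bar>g x\<bar>\<^sup>2" by (rule sum_squares_bound)
    moreover have "0 \<le> \<bar>f x\<bar> * \<bar>g x\<bar>" by simp
    ultimately have "\<bar>f x\<bar> * \<bar>g x\<bar> \<le> (f x)\<^sup>2 + (g x)\<^sup>2"
      using power2_abs[of "f x"] power2_abs[of "g x"] by linarith
    then show "norm (f x * g x) \<le> norm ((f x)\<^sup>2 + (g x)\<^sup>2)" by (simp add: abs_mult)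
  qed
qed measurable

lemma integrable_square_diff:
  fixes f g :: "'a \<Rightarrow> real"
  assumes "f \<in> borel_measurable M" "g \<in> borel_measurable M"
    and "integrable M (\<lambda>x. (f x)\<^sup>2)" "integrable M (\<lambda>x. (g x)\<^sup>2)"
  shows "integrable M (\<lambda>x. (f x - g x)\<^sup>2)"
  using integrable_mult_of_square_integrable[OF assms] assms(3,4)
  by (simp add: power2_diff mult.assoc)

lemma (in prob_space) integral_square_diff_eq_variance:
  fixes h :: "'a \<Rightarrow> real"
  assumes [measurable]: "h \<in> borel_measurable M"
    and square_int: "integrable M (\<lambda>x. (c - h x)\<^sup>2)"
  shows "(\<integral>x. (c - h x)\<^sup>2 \<partial>M) = (c - expectation h)\<^sup>2 + variance h"
proof -
  have int_diff: "integrable M (\<lambda>x. c - h x)"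
    by (rule square_integrable_imp_integrable) (use square_int in auto)
  then have "integrable M h"
    using Bochner_Integration.integrable_diff[OF integrable_const int_diff, of c] by simp
  then have mean: "expectation (\<lambda>x. c - h x) = c - expectation h"
    by (simp add: prob_space)
  have "variance h = variance (\<lambda>x. c - h x)"
    unfolding mean by (simp add: power2_commute)
  also have "\<dots> = (\<integral>x. (c - h x)\<^sup>2 \<partial>M) - (c - expectation h)\<^sup>2"
    using variance_eq[OF int_diff square_int] unfolding mean .
  finally show ?thesis by simp
qed

lemma (in pair_prob_space) integral_pair_square_error_eq:
  fixes f :: "'a \<Rightarrow> 'b \<Rightarrow> real" and Y :: "'b \<Rightarrow> real"
  assumes [measurable]: "Y \<in> borel_measurable M2"
    and f_meas: "(\<lambda>z. f (fst z) (snd z)) \<in> borel_measurable (M1 \<Otimes>\<^sub>M M2)"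
    and square_int: "integrable (M1 \<Otimes>\<^sub>M M2) (\<lambda>z. (Y (snd z) - f (fst z) (snd z))\<^sup>2)"
  shows "(\<integral>z. (Y (snd z) - f (fst z) (snd z))\<^sup>2 \<partial>(M1 \<Otimes>\<^sub>M M2))
           = (\<integral>y. (Y y - (\<integral>x. f x y \<partial>M1))\<^sup>2 \<partial>M2) + (\<integral>y. var M1 (\<lambda>x. f x y) \<partial>M2)"
    and "integrable M2 (\<lambda>y. (Y y - (\<integral>x. f x y \<partial>M1))\<^sup>2)"
proof -
  define mean where "mean y = (\<integral>x. f x y \<partial>M1)" for y
  define risk where "risk y = (\<integral>x. (Y y - f x y)\<^sup>2 \<partial>M1)" for y
  have [measurable]: "(\<lambda>z. f (snd z) (fst z)) \<in> borel_measurable (M2 \<Otimes>\<^sub>M M1)"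
    using measurable_pair_swap[OF f_meas] by (simp add: case_prod_beta')
  have [measurable]: "mean \<in> borel_measurable M2"
    unfolding mean_def by measurable
  have "(\<lambda>(y, x). (f x y - mean y)\<^sup>2) \<in> borel_measurable (M2 \<Otimes>\<^sub>M M1)"
    by (simp add: case_prod_beta') measurable
  from M1.borel_measurable_lebesgue_integral[OF this]
  have [measurable]: "(\<lambda>y. var M1 (\<lambda>x. f x y)) \<in> borel_measurable M2"
    unfolding var_def mean_def by simp
  have int_uncurried: "integrable (M1 \<Otimes>\<^sub>M M2) (\<lambda>(x, y). (Y y - f x y)\<^sup>2)"
    using square_int by (simp add: case_prod_beta')
  have risk_int: "integrable M2 risk"
    unfolding risk_def using integrable_snd[OF int_uncurried] .
  have risk_split: "AE y in M2. risk y = (Y y - mean y)\<^sup>2 + var M1 (\<lambda>x. f x y)"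
    using AE_integrable_snd[OF int_uncurried] AE_space
  proof eventually_elim
    case (elim y)
    have "(\<lambda>x. f x y) \<in> borel_measurable M1"
      using measurable_compose[OF measurable_Pair2'[OF elim(2)] f_meas] by simp
    from M1.integral_square_diff_eq_variance[OF this elim(1)]
    show ?case unfolding risk_def mean_def var_def .
  qed
  have var_nonneg: "0 \<le> var M1 h" for h
    unfolding var_def by simp
  have bias_int: "integrable M2 (\<lambda>y. (Y y - mean y)\<^sup>2)"
    by (rule Bochner_Integration.integrable_bound[OF risk_int])
       (use risk_split var_nonneg in \<open>auto elim!: eventually_mono\<close>)
  have var_int: "integrable M2 (\<lambda>y. var M1 (\<lambda>x. f x y))"
    by (rule Bochner_Integration.integrable_bound[OF risk_int])
       (use risk_split var_nonneg in \<open>auto elim!: eventually_mono\<close>)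
  have "(\<integral>z. (Y (snd z) - f (fst z) (snd z))\<^sup>2 \<partial>(M1 \<Otimes>\<^sub>M M2)) = (\<integral>y. risk y \<partial>M2)"
    unfolding risk_def integral_snd[OF int_uncurried] by (simp add: case_prod_beta')
  also have "\<dots> = (\<integral>y. (Y y - mean y)\<^sup>2 + var M1 (\<lambda>x. f x y) \<partial>M2)"
    by (rule integral_cong_AE) (use risk_split risk_int in auto)
  also have "\<dots> = (\<integral>y. (Y y - mean y)\<^sup>2 \<partial>M2) + (\<integral>y. var M1 (\<lambda>x. f x y) \<partial>M2)"
    using bias_int var_int by simp
  finally show "(\<integral>z. (Y (snd z) - f (fst z) (snd z))\<^sup>2 \<partial>(M1 \<Otimes>\<^sub>M M2))
           = (\<integral>y. (Y y - (\<integral>x. f x y \<partial>M1))\<^sup>2 \<partial>M2) + (\<integral>y. var M1 (\<lambda>x. f x y) \<partial>M2)"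
    unfolding mean_def .
  show "integrable M2 (\<lambda>y. (Y y - (\<integral>x. f x y \<partial>M1))\<^sup>2)"
    using bias_int unfolding mean_def .
qed

lemma (in sigma_finite_subalgebra) square_integrable_real_cond_exp:
  fixes Y :: "'a \<Rightarrow> real"
  assumes "integrable M Y" "integrable M (\<lambda>x. (Y x)\<^sup>2)"
  shows "integrable M (\<lambda>x. (real_cond_exp M F Y x)\<^sup>2)"
  by (rule integrable_convex_cond_exp[where I=UNIV and q="\<lambda>x. x\<^sup>2"])
     (use assms convex_power2 in auto)

text \<open>The residual \<open>Y - E[Y|F]\<close> is orthogonal to every square
  integrable \<open>F\<close>-measurable function.\<close>

lemma (in sigma_finite_subalgebra) integral_square_diff_real_cond_exp:
  fixes Y g :: "'a \<Rightarrow> real"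
  assumes [measurable]: "Y \<in> borel_measurable M" and Y_int: "integrable M Y"
    and Y_square_int: "integrable M (\<lambda>x. (Y x)\<^sup>2)"
    and g_meas: "g \<in> borel_measurable F" and g_square_int: "integrable M (\<lambda>x. (g x)\<^sup>2)"
  shows "(\<integral>x. (Y x - g x)\<^sup>2 \<partial>M)
     = (\<integral>x. (Y x - real_cond_exp M F Y x)\<^sup>2 \<partial>M) + (\<integral>x. (real_cond_exp M F Y x - g x)\<^sup>2 \<partial>M)"
proof -
  define h where "h = real_cond_exp M F Y"
  have [measurable]: "h \<in> borel_measurable M" "g \<in> borel_measurable M"
    unfolding h_def using measurable_from_subalg[OF subalg g_meas] by simp_all
  have diff_F: "(\<lambda>x. h x - g x) \<in> borel_measurable F"
    unfolding h_def using g_meas by measurable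
  have h_square_int: "integrable M (\<lambda>x. (h x)\<^sup>2)"
    unfolding h_def using Y_int Y_square_int by (rule square_integrable_real_cond_exp)
  have hg_square_int: "integrable M (\<lambda>x. (h x - g x)\<^sup>2)"
    by (rule integrable_square_diff) (use h_square_int g_square_int in auto)
  have Yh_square_int: "integrable M (\<lambda>x. (Y x - h x)\<^sup>2)"
    by (rule integrable_square_diff) (use h_square_int Y_square_int in auto)
  have int_Y: "integrable M (\<lambda>x. (h x - g x) * Y x)"
    by (rule integrable_mult_of_square_integrable) (use hg_square_int Y_square_int in auto)
  have int_h: "integrable M (\<lambda>x. (h x - g x) * h x)"
    by (rule integrable_mult_of_square_integrable) (use hg_square_int h_square_int in auto)
  have orthogonal: "(\<integral>x. (h x - g x) * h x \<partial>M) = (\<integral>x. (h x - g x) * Y x \<partial>M)"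
    unfolding h_def by (rule real_cond_exp_intg(2)) (use int_Y diff_F in \<open>simp_all add: h_def\<close>)
  have "(\<lambda>x. (Y x - g x)\<^sup>2)
      = (\<lambda>x. (Y x - h x)\<^sup>2 + (h x - g x)\<^sup>2 + 2 * ((h x - g x) * Y x - (h x - g x) * h x))"
    by (rule ext) (simp add: power2_eq_square algebra_simps)
  then have "(\<integral>x. (Y x - g x)\<^sup>2 \<partial>M) = (\<integral>x. (Y x - h x)\<^sup>2 \<partial>M) + (\<integral>x. (h x - g x)\<^sup>2 \<partial>M)
      + 2 * ((\<integral>x. (h x - g x) * Y x \<partial>M) - (\<integral>x. (h x - g x) * h x \<partial>M))"
    using Yh_square_int hg_square_int int_Y int_h by simp
  then show ?thesis
    using orthogonal unfolding h_def by simp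
qed

lemma (in sigma_finite_subalgebra) integral_cond_var_nested_subalg:
  fixes Y :: "'a \<Rightarrow> real"
  assumes G: "subalgebra M G" "subalgebra G F"
    and Y_meas [measurable]: "Y \<in> borel_measurable M" and Y_int: "integrable M Y"
    and Y_square_int: "integrable M (\<lambda>x. (Y x)\<^sup>2)"
  shows "(\<integral>x. (Y x - real_cond_exp M F Y x)\<^sup>2 \<partial>M)
     = (\<integral>x. (Y x - real_cond_exp M G Y x)\<^sup>2 \<partial>M) + (\<integral>x. cond_var M F (real_cond_exp M G Y) x \<partial>M)"
proof -
  interpret G: sigma_finite_subalgebra M G
    by (rule nested_subalg_is_sigma_finite[OF G])
  define EF where "EF = real_cond_exp M F Y"
  define EG where "EG = real_cond_exp M G Y"
  have [measurable]: "EF \<in> borel_measurable M" "EG \<in> borel_measurable M" "EF \<in> borel_measurable F"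
    unfolding EF_def EG_def by simp_all
  have EF_G: "EF \<in> borel_measurable G"
    by (rule measurable_from_subalg[OF G(2)]) (simp add: EF_def)
  have EF_square_int: "integrable M (\<lambda>x. (EF x)\<^sup>2)"
    unfolding EF_def using Y_int Y_square_int by (rule square_integrable_real_cond_exp)
  have EG_square_int: "integrable M (\<lambda>x. (EG x)\<^sup>2)"
    unfolding EG_def using Y_int Y_square_int by (rule G.square_integrable_real_cond_exp)
  have EG_int: "integrable M EG"
    unfolding EG_def using Y_int by (rule G.real_cond_exp_int(1))
  have tower: "AE x in M. real_cond_exp M F EG x = EF x"
    unfolding EG_def EF_def using G Y_int by (rule real_cond_exp_nested_subalg)
  have "(\<integral>x. cond_var M F EG x \<partial>M) = (\<integral>x. (EG x - real_cond_exp M F EG x)\<^sup>2 \<partial>M)"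
    unfolding cond_var_def
    by (rule real_cond_exp_int(2)) (rule integrable_square_diff, use EG_square_int
        square_integrable_real_cond_exp[OF EG_int EG_square_int] in auto)
  also have "\<dots> = (\<integral>x. (EG x - EF x)\<^sup>2 \<partial>M)"
    by (rule integral_cong_AE) (use tower in auto)
  finally have "(\<integral>x. cond_var M F EG x \<partial>M) = (\<integral>x. (EG x - EF x)\<^sup>2 \<partial>M)" .
  moreover have "(\<integral>x. (Y x - EF x)\<^sup>2 \<partial>M) = (\<integral>x. (Y x - EG x)\<^sup>2 \<partial>M) + (\<integral>x. (EG x - EF x)\<^sup>2 \<partial>M)"
    unfolding EG_def
    by (rule G.integral_square_diff_real_cond_exp[OF Y_meas Y_int Y_square_int EF_G EF_square_int])
  ultimately show ?thesis
    unfolding EF_def EG_def by simp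
qed

lemma expected_square_error_decomposition:
  fixes f :: "'p \<Rightarrow> 'a \<Rightarrow> real" and Y :: "'a \<Rightarrow> real"
  assumes P: "prob_space P" and M: "prob_space M" and F: "subalgebra M F"
    and Y_meas [measurable]: "Y \<in> borel_measurable M" and Y_square_int: "integrable M (\<lambda>x. (Y x)\<^sup>2)"
    and f_meas: "(\<lambda>z. f (fst z) (snd z)) \<in> borel_measurable (P \<Otimes>\<^sub>M M)"
    and mean_meas: "(\<lambda>x. \<integral>d. f d x \<partial>P) \<in> borel_measurable F"
    and square_int: "integrable (P \<Otimes>\<^sub>M M) (\<lambda>z. (Y (snd z) - f (fst z) (snd z))\<^sup>2)"
  shows "(\<integral>z. (Y (snd z) - f (fst z) (snd z))\<^sup>2 \<partial>(P \<Otimes>\<^sub>M M))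
     = (\<integral>x. (Y x - real_cond_exp M F Y x)\<^sup>2 \<partial>M)
       + (\<integral>x. ((\<integral>d. f d x \<partial>P) - real_cond_exp M F Y x)\<^sup>2 \<partial>M)
       + (\<integral>x. var P (\<lambda>d. f d x) \<partial>M)"
proof -
  interpret pair_prob_space P M
    using P M by (simp add: pair_prob_space_def pair_sigma_finite_def prob_space_imp_sigma_finite)
  interpret F: finite_measure_subalgebra M F
    using F by unfold_locales
  define mean where "mean x = (\<integral>d. f d x \<partial>P)" for x
  note pair_decomposition = integral_pair_square_error_eq[OF Y_meas f_meas square_int, folded mean_def]
  have [measurable]: "mean \<in> borel_measurable M"
    unfolding mean_def using measurable_from_subalg[OF F mean_meas] .
  have Y_int: "integrable M Y"
    using M2.square_integrable_imp_integrable[OF Y_meas Y_square_int] .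
  have "integrable M (\<lambda>x. (Y x - (Y x - mean x))\<^sup>2)"
    by (rule integrable_square_diff[OF _ _ Y_square_int pair_decomposition(2)]) measurable
  then have mean_square_int: "integrable M (\<lambda>x. (mean x)\<^sup>2)"
    by simp
  have mean_F: "mean \<in> borel_measurable F"
    using mean_meas unfolding mean_def .
  have pythagoras: "(\<integral>x. (Y x - mean x)\<^sup>2 \<partial>M)
      = (\<integral>x. (Y x - real_cond_exp M F Y x)\<^sup>2 \<partial>M) + (\<integral>x. (real_cond_exp M F Y x - mean x)\<^sup>2 \<partial>M)"
    by (rule F.integral_square_diff_real_cond_exp[OF Y_meas Y_int Y_square_int mean_F mean_square_int])
  have bias_commute: "(\<integral>x. (real_cond_exp M F Y x - mean x)\<^sup>2 \<partial>M) = (\<integral>x. (mean x - real_cond_exp M F Y x)\<^sup>2 \<partial>M)"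
    by (simp add: power2_commute)
  have "(\<integral>z. (Y (snd z) - f (fst z) (snd z))\<^sup>2 \<partial>(P \<Otimes>\<^sub>M M))
      = (\<integral>x. (Y x - mean x)\<^sup>2 \<partial>M) + (\<integral>x. var P (\<lambda>d. f d x) \<partial>M)"
    by (rule pair_decomposition(1))
  also have "\<dots> = (\<integral>x. (Y x - real_cond_exp M F Y x)\<^sup>2 \<partial>M)
      + (\<integral>x. (mean x - real_cond_exp M F Y x)\<^sup>2 \<partial>M) + (\<integral>x. var P (\<lambda>d. f d x) \<partial>M)"
    unfolding pythagoras bias_commute ..
  finally show ?thesis
    unfolding mean_def .
qed

locale tuple_distribution = prob_space D for D :: "'s tup measure" +
  fixes SS :: "'s measure"
  assumes sets_D: "sets D = sets (SS \<Otimes>\<^sub>M (borel :: real measure) \<Otimes>\<^sub>M SS)"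
begin

lemma measurable_D: "measurable D N = measurable (SS \<Otimes>\<^sub>M (borel :: real measure) \<Otimes>\<^sub>M SS) N"
  by (rule measurable_cong_sets[OF sets_D refl])

lemma measurable_cur [measurable]: "cur \<in> D \<rightarrow>\<^sub>M SS"
  unfolding measurable_D cur_def by measurable

lemma measurable_fut [measurable]: "fut \<in> D \<rightarrow>\<^sub>M SS"
  unfolding measurable_D fut_def by measurable

lemma measurable_act [measurable]: "act \<in> borel_measurable D"
  unfolding measurable_D act_def by measurable

lemma subalgebra_sig_s: "subalgebra D (sig_s D SS)"
  using sets_image_in_sets[OF refl measurable_cur] by (auto simp: subalgebra_def sig_s_def)

lemma subalgebra_sig_ss: "subalgebra D (sig_ss D SS)"
  using sets_image_in_sets[OF refl, of "\<lambda>x. (cur x, fut x)" D "SS \<Otimes>\<^sub>M SS"]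
  by (auto simp: subalgebra_def sig_ss_def)

lemma measurable_cur_fut_sig_ss: "(\<lambda>x. (cur x, fut x)) \<in> sig_ss D SS \<rightarrow>\<^sub>M SS \<Otimes>\<^sub>M SS"
  unfolding sig_ss_def
  by (rule measurable_vimage_algebra1) (auto intro: measurable_space[of _ D])

lemma measurable_cur_sig_s: "cur \<in> sig_s D SS \<rightarrow>\<^sub>M SS"
  unfolding sig_s_def
  by (rule measurable_vimage_algebra1) (auto intro: measurable_space[OF measurable_cur])

lemma subalgebra_sig_s_sig_ss: "subalgebra (sig_ss D SS) (sig_s D SS)"
proof -
  have "cur \<in> sig_ss D SS \<rightarrow>\<^sub>M SS"
    using measurable_compose[OF measurable_cur_fut_sig_ss measurable_fst] by simp
  from sets_image_in_sets[OF _ this] show ?thesis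
    by (simp add: subalgebra_def sig_s_def sig_ss_def)
qed

lemma prob_space_Dp:
  assumes phat_kernel: "phat \<in> SS \<rightarrow>\<^sub>M prob_algebra SS"
  shows "prob_space (Dp D phat)"
  unfolding Dp_def
proof (rule prob_space_bind[where S=D])
  have phat_space: "phat (cur x) \<in> space (prob_algebra SS)" if "x \<in> space D" for x
    using measurable_space[OF phat_kernel measurable_space[OF measurable_cur that]] .
  have complete_meas: "(\<lambda>(x, s'). (cur x, act x, s')) \<in> D \<Otimes>\<^sub>M SS \<rightarrow>\<^sub>M D"
    unfolding measurable_cong_sets[OF refl sets_D] by measurable
  show "AE x in D. prob_space (distr (phat (cur x)) D (\<lambda>s'. (cur x, act x, s')))"
  proof (rule AE_I2)
    fix x assume x: "x \<in> space D"
    interpret phat_x: prob_space "phat (cur x)"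
      using phat_space[OF x] by (simp add: space_prob_algebra)
    have "sets (phat (cur x)) = sets SS"
      using phat_space[OF x] by (simp add: space_prob_algebra)
    moreover have "(\<lambda>s'. (cur x, act x, s')) \<in> SS \<rightarrow>\<^sub>M D"
      unfolding measurable_cong_sets[OF refl sets_D] using measurable_space[OF measurable_cur x]
      by (intro measurable_Pair measurable_const) auto
    ultimately have "(\<lambda>s'. (cur x, act x, s')) \<in> phat (cur x) \<rightarrow>\<^sub>M D"
      by (simp cong: measurable_cong_sets)
    then show "prob_space (distr (phat (cur x)) D (\<lambda>s'. (cur x, act x, s')))"
      by (rule phat_x.prob_space_distr)
  qed
  show "(\<lambda>x. distr (phat (cur x)) D (\<lambda>s'. (cur x, act x, s'))) \<in> D \<rightarrow>\<^sub>M subprob_algebra D"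
    by (rule measurable_distr2[OF _ measurable_compose[OF measurable_cur
          measurable_prob_algebraD[OF phat_kernel]]]) (use complete_meas in simp)
qed

lemma integral_square_error_mubar:
  assumes act_square_int: "integrable D (\<lambda>x. (act x)\<^sup>2)"
  shows "(\<integral>x. (act x - mubar D SS x)\<^sup>2 \<partial>D) = (\<integral>x. (act x - xibar D SS x)\<^sup>2 \<partial>D) + Delta D SS"
proof -
  interpret sig_s: finite_measure_subalgebra D "sig_s D SS"
    using subalgebra_sig_s by unfold_locales
  show ?thesis
    unfolding mubar_def xibar_def Delta_def
    by (rule sig_s.integral_cond_var_nested_subalg[OF subalgebra_sig_ss subalgebra_sig_s_sig_ss
          measurable_act square_integrable_imp_integrable[OF measurable_act act_square_int]
          act_square_int])
qed

lemma EPE_mu_eq: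
  assumes P: "prob_space P" and act_square_int: "integrable D (\<lambda>x. (act x)\<^sup>2)"
    and mu_meas: "(\<lambda>z. mu (fst z) (snd z)) \<in> borel_measurable (P \<Otimes>\<^sub>M SS)"
    and EPE_int: "integrable (P \<Otimes>\<^sub>M D) (\<lambda>z. (act (snd z) - mu (fst z) (cur (snd z)))\<^sup>2)"
  shows "EPE_mu D P mu = (\<integral>x. (act x - mubar D SS x)\<^sup>2 \<partial>D) + bias2_mu D SS P mu
           + (\<integral>x. var P (\<lambda>d. mu d (cur x)) \<partial>D)"
proof -
  interpret P: prob_space P by fact
  have "(\<lambda>z. (fst z, cur (snd z))) \<in> P \<Otimes>\<^sub>M D \<rightarrow>\<^sub>M P \<Otimes>\<^sub>M SS"
    by measurable
  from measurable_compose[OF this mu_meas]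
  have predictor_meas: "(\<lambda>z. mu (fst z) (cur (snd z))) \<in> borel_measurable (P \<Otimes>\<^sub>M D)"
    by simp
  have "(\<lambda>(s, d). mu d s) \<in> borel_measurable (SS \<Otimes>\<^sub>M P)"
    using measurable_pair_swap[OF mu_meas] by (simp add: case_prod_beta')
  from measurable_compose[OF measurable_cur_sig_s P.borel_measurable_lebesgue_integral[OF this]]
  have mean_meas: "(\<lambda>x. \<integral>d. mu d (cur x) \<partial>P) \<in> borel_measurable (sig_s D SS)" .
  show ?thesis
    using expected_square_error_decomposition[where f="\<lambda>d x. mu d (cur x)", OF P prob_space_axioms
        subalgebra_sig_s measurable_act act_square_int predictor_meas mean_meas EPE_int]
    by (simp add: EPE_mu_def bias2_mu_def mubar_def)
qed

lemma EPE_xi_eq: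
  assumes Q: "prob_space Q" and act_square_int: "integrable D (\<lambda>x. (act x)\<^sup>2)"
    and xi_meas: "(\<lambda>z. xi (fst z) (fst (snd z)) (snd (snd z))) \<in> borel_measurable (Q \<Otimes>\<^sub>M (SS \<Otimes>\<^sub>M SS))"
    and EPE_int: "integrable (Q \<Otimes>\<^sub>M D) (\<lambda>z. (act (snd z) - xi (fst z) (cur (snd z)) (fut (snd z)))\<^sup>2)"
  shows "EPE_xi D Q xi = (\<integral>x. (act x - xibar D SS x)\<^sup>2 \<partial>D) + bias2_xi D SS Q xi
           + (\<integral>x. var Q (\<lambda>e. xi e (cur x) (fut x)) \<partial>D)"
proof -
  interpret Q: prob_space Q by fact
  have "(\<lambda>z. (fst z, cur (snd z), fut (snd z))) \<in> Q \<Otimes>\<^sub>M D \<rightarrow>\<^sub>M Q \<Otimes>\<^sub>M (SS \<Otimes>\<^sub>M SS)"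
    by measurable
  from measurable_compose[OF this xi_meas]
  have predictor_meas: "(\<lambda>z. xi (fst z) (cur (snd z)) (fut (snd z))) \<in> borel_measurable (Q \<Otimes>\<^sub>M D)"
    by simp
  have "(\<lambda>(p, e). xi e (fst p) (snd p)) \<in> borel_measurable ((SS \<Otimes>\<^sub>M SS) \<Otimes>\<^sub>M Q)"
    using measurable_pair_swap[OF xi_meas] by (simp add: case_prod_beta')
  from measurable_compose[OF measurable_cur_fut_sig_ss Q.borel_measurable_lebesgue_integral[OF this]]
  have mean_meas: "(\<lambda>x. \<integral>e. xi e (cur x) (fut x) \<partial>Q) \<in> borel_measurable (sig_ss D SS)"
    by simp
  show ?thesis
    using expected_square_error_decomposition[where f="\<lambda>e x. xi e (cur x) (fut x)", OF Q prob_space_axioms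
        subalgebra_sig_ss measurable_act act_square_int predictor_meas mean_meas EPE_int]
    by (simp add: EPE_xi_def bias2_xi_def xibar_def)
qed

end

theorem corollary1:
  fixes D :: "'s tup measure" and SS :: "'s measure"
    and phat :: "'s \<Rightarrow> 's measure" and n m :: nat
    and mu :: "(nat \<Rightarrow> 's tup) \<Rightarrow> 's \<Rightarrow> real"
    and xi :: "(nat \<Rightarrow> 's tup) \<Rightarrow> 's \<Rightarrow> 's \<Rightarrow> real"
  assumes D_prob: "prob_space D"
    and D_sets: "sets D = sets (SS \<Otimes>\<^sub>M (borel :: real measure) \<Otimes>\<^sub>M SS)"
    and a_L2: "integrable D (\<lambda>x. (act x)\<^sup>2)"
    and phat_kernel: "phat \<in> SS \<rightarrow>\<^sub>M prob_algebra SS"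
    and mu_meas: "(\<lambda>z. mu (fst z) (snd z)) \<in> borel_measurable (data_n D n \<Otimes>\<^sub>M SS)"
    and xi_meas: "(\<lambda>z. xi (fst z) (fst (snd z)) (snd (snd z)))
                    \<in> borel_measurable (data_pm D phat m \<Otimes>\<^sub>M (SS \<Otimes>\<^sub>M SS))"
    and EPE_mu_fin: "integrable (data_n D n \<Otimes>\<^sub>M D)
                       (\<lambda>z. (act (snd z) - mu (fst z) (cur (snd z)))\<^sup>2)"
    and EPE_xi_fin: "integrable (data_pm D phat m \<Otimes>\<^sub>M D)
                       (\<lambda>z. (act (snd z) - xi (fst z) (cur (snd z)) (fut (snd z)))\<^sup>2)"
  shows "EPE_mu D (data_n D n) mu - EPE_xi D (data_pm D phat m) xi
         = Delta D SS
           + delta D (data_n D n) (data_pm D phat m) mu xi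
           + (bias2_mu D SS (data_n D n) mu - bias2_xi D SS (data_pm D phat m) xi)"
proof -
  interpret tuple_distribution D SS
    using D_prob D_sets by (simp add: tuple_distribution_def tuple_distribution_axioms_def)
  have "prob_space (data_n D n)"
    unfolding data_n_def by (rule prob_space_PiM) (rule D_prob)
  note EPE_mu = EPE_mu_eq[OF this a_L2 mu_meas EPE_mu_fin]
  have "prob_space (data_pm D phat m)"
    unfolding data_pm_def by (rule prob_space_PiM) (rule prob_space_Dp[OF phat_kernel])
  note EPE_xi = EPE_xi_eq[OF this a_L2 xi_meas EPE_xi_fin]
  show ?thesis
    unfolding EPE_mu EPE_xi integral_square_error_mubar[OF a_L2] delta_def by simp
qed

end
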